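(* Let $\mathbf{M}\in\mathbb{R}^{n\times n}$ be a constant symmetric positive definite matrix, $V\in\mathcal{C}^1(\mathbb{R}^n,\mathbb{R})$, $\tilde{\mathbf{B}}:\mathbb{R}^{2n+m}\to\mathbb{R}^{n\times p}$, and $\mathbf{g}:\mathbb{R}^n\to\mathbb{R}^m$ a map each of whose components is a polynomial of degree at most two, with Jacobian $\nabla\mathbf{g}(\mathbf{q})\in\mathbb{R}^{m\times n}$. Let $h>0$ and let $(\mathbf{q}^k,\mathbf{v}^k,\boldsymbol{\lambda}^k)_{k=0}^{N}$ and inputs $(\mathbf{u}^{k+1/2})_{k=0}^{N-1}$ satisfy, for every $n=0,\dots,N-1$, with $\square^{n+1/2}:=\tfrac12(\square^{n+1}+\square^n)$ and $\mathbf{x}^{n+1/2}=(\mathbf{q}^{n+1/2},\mathbf{v}^{n+1/2},\boldsymbol{\lambda}^{n+1/2})$, $$\mathbf{q}^{n+1}-\mathbf{q}^n=h\,\mathbf{v}^{n+1/2},$$ $$\mathbf{M}(\mathbf{v}^{n+1}-\mathbf{v}^n)=-h\,\nabla V(\mathbf{q}^{n+1/2})-h\,\nabla\mathbf{g}(\mathbf{q}^{n+1/2})^\top\boldsymbol{\lambda}^{n+1/2}+h\,\tilde{\mathbf{B}}(\mathbf{x}^{n+1/2})\mathbf{u}^{n+1/2},$$ $$\mathbf{0}=h\,\nabla\mathbf{g}(\mathbf{q}^{n+1/2})\mathbf{v}^{n+1/2}.$$ If $\mathbf{g}(\mathbf{q}^0)=\mathbf{0}$, then $\mathbf{g}(\mathbf{q}^n)=\mathbf{0}$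 for all $n=0,\dots,N$. *)

theory Defs
  imports "HOL-Analysis.Analysis"
begin

definition poly_deg_le2 :: "(real ^ 'n \<Rightarrow> real) \<Rightarrow> bool" where
  "poly_deg_le2 f \<longleftrightarrow>
     (\<exists>c::real. \<exists>b::real ^ 'n. \<exists>A::real ^ 'n ^ 'n. \<forall>x. f x = c + b \<bullet> x + x \<bullet> (A *v x))"

definition sym_pos_def_mat :: "real ^ 'n ^ 'n \<Rightarrow> bool" where
  "sym_pos_def_mat M \<longleftrightarrow> transpose M = M \<and> (\<forall>x. x \<noteq> 0 \<longrightarrow> x \<bullet> (M *v x) > 0)"

end

theory Submission
  imports Defs
begin

text \<open>The midpoint rule is exact for polynomials of degree at most two: for such a g,
  g(y) - g(x) = Dg((x + y)/2) (y - x). Combined with the midpoint discretisation of the hidden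
  constraint, Dg(q(n+1/2)) v(n+1/2) = 0, and with q(n+1) - q(n) = h v(n+1/2), this gives
  g(q(n+1)) = g(q(n)), so the constraint is preserved exactly.\<close>

lemma quadratic_has_derivative:
  fixes A :: "real^'n^'n" and b :: "real^'n"
  shows "((\<lambda>x. c + b \<bullet> x + x \<bullet> (A *v x)) has_derivative
           (\<lambda>w. b \<bullet> w + (z \<bullet> (A *v w) + w \<bullet> (A *v z)))) (at z)"
proof -
  have "((*v) A has_derivative (*v) A) (at z)"
    by (metis bounded_linear_imp_has_derivative matrix_vector_mul_bounded_linear)
  then show ?thesis
    by (intro derivative_eq_intros) (auto intro: bounded_linear_imp_has_derivative)
qed

lemma quadratic_midpoint_difference:
  fixes A :: "real^'n^'n" and b :: "real^'n"
  shows "(c + b \<bullet> y + y \<bullet> (A *v y)) - (c + b \<bullet> x + x \<bullet> (A *v x)) =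
     b \<bullet> (y - x) + (midpoint x y \<bullet> (A *v (y - x)) + (y - x) \<bullet> (A *v midpoint x y))"
  by (simp add: midpoint_def inner_diff_left inner_diff_right inner_add_left inner_add_right
      algebra_simps)

lemma poly_deg_le2_differentiable:
  assumes "poly_deg_le2 f"
  shows "f differentiable (at z)"
proof -
  obtain c b A where f: "f = (\<lambda>x. c + b \<bullet> x + x \<bullet> (A *v x))"
    using assms unfolding poly_deg_le2_def fun_eq_iff by blast
  show ?thesis
    using differentiableI[OF quadratic_has_derivative[of c b A z, folded f]] .
qed

lemma poly_deg_le2_midpoint_difference:
  assumes "poly_deg_le2 f" and "(f has_derivative f') (at (midpoint x y))"
  shows "f y - f x = f' (y - x)"
proof -
  obtain c b A where f: "f = (\<lambda>x. c + b \<bullet> x + x \<bullet> (A *v x))"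
    using assms(1) unfolding poly_deg_le2_def fun_eq_iff by blast
  let ?z = "midpoint x y"
  have "f' = (\<lambda>w. b \<bullet> w + (?z \<bullet> (A *v w) + w \<bullet> (A *v ?z)))"
    using has_derivative_unique[OF assms(2) quadratic_has_derivative[of c b A, folded f]] .
  then show ?thesis
    unfolding f quadratic_midpoint_difference by simp
qed

lemma quadratic_map_midpoint_difference:
  fixes g :: "real^'n \<Rightarrow> real^'m"
  assumes quad: "\<And>i. poly_deg_le2 (\<lambda>x. g x $ i)"
  shows "g y - g x = jacobian g (at (midpoint x y)) *v (y - x)"
proof -
  let ?J = "jacobian g (at (midpoint x y))"
  have "(\<lambda>x. g x \<bullet> i) differentiable (at (midpoint x y))" if "i \<in> Basis" for i
    using that poly_deg_le2_differentiable[OF quad] by (auto simp: Basis_vec_def inner_axis)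
  then have "g differentiable (at (midpoint x y))"
    using differentiable_componentwise_within[where S = UNIV] by blast
  then have "(g has_derivative (\<lambda>w. ?J *v w)) (at (midpoint x y))"
    using jacobian_works by blast
  then have "((\<lambda>x. g x $ i) has_derivative (\<lambda>w. (?J *v w) $ i)) (at (midpoint x y))" for i
    using bounded_linear.has_derivative[OF bounded_linear_vec_nth] by blast
  then have "g y $ i - g x $ i = (?J *v (y - x)) $ i" for i
    using poly_deg_le2_midpoint_difference[OF quad] by blast
  then show ?thesis
    by (simp add: vec_eq_iff)
qed

theorem mainTheorem3:
  fixes M :: "real ^ 'n ^ 'n"
    and V :: "real ^ 'n \<Rightarrow> real"
    and gradV :: "real ^ 'n \<Rightarrow> real ^ 'n"
    and Bt :: "(real ^ 'n) \<times> (real ^ 'n) \<times> (real ^ 'm) \<Rightarrow> real ^ 'p ^ 'n"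
    and g :: "real ^ 'n \<Rightarrow> real ^ 'm"
    and h :: real and N :: nat
    and q v :: "nat \<Rightarrow> real ^ 'n"
    and lam :: "nat \<Rightarrow> real ^ 'm"
    and u :: "nat \<Rightarrow> real ^ 'p"
  assumes M_spd: "sym_pos_def_mat M"
    and V_grad: "\<And>x. (V has_derivative (\<lambda>w. gradV x \<bullet> w)) (at x)"
    and V_C1: "continuous_on UNIV gradV"
    and g_quad: "\<And>i. poly_deg_le2 (\<lambda>x. g x $ i)"
    and h_pos: "h > 0"
    and eq_q: "\<And>k. k < N \<Longrightarrow> q (Suc k) - q k = h *\<^sub>R ((1/2) *\<^sub>R (v (Suc k) + v k))"
    and eq_v: "\<And>k. k < N \<Longrightarrow>
       (let qh = (1/2) *\<^sub>R (q (Suc k) + q k);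
            vh = (1/2) *\<^sub>R (v (Suc k) + v k);
            lh = (1/2) *\<^sub>R (lam (Suc k) + lam k)
        in M *v (v (Suc k) - v k) =
             - (h *\<^sub>R gradV qh)
             - h *\<^sub>R (transpose (jacobian g (at qh)) *v lh)
             + h *\<^sub>R (Bt (qh, vh, lh) *v u k))"
    and eq_c: "\<And>k. k < N \<Longrightarrow>
       h *\<^sub>R (jacobian g (at ((1/2) *\<^sub>R (q (Suc k) + q k))) *v ((1/2) *\<^sub>R (v (Suc k) + v k))) = 0"
    and init: "g (q 0) = 0"
  shows "\<forall>k\<le>N. g (q k) = 0"
proof -
  have step: "g (q (Suc k)) = g (q k)" if "k < N" for k
  proof -
    let ?J = "jacobian g (at (midpoint (q k) (q (Suc k))))"
    let ?vh = "(1/2) *\<^sub>R (v (Suc k) + v k)"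
    have "?J *v ?vh = 0"
      using eq_c[OF that] h_pos by (simp add: midpoint_def add.commute)
    then have "g (q (Suc k)) - g (q k) = 0"
      using quadratic_map_midpoint_difference[OF g_quad] eq_q[OF that]
      by (simp add: matrix_vector_mult_scaleR)
    then show ?thesis by simp
  qed
  have "k \<le> N \<longrightarrow> g (q k) = 0" for k
    by (induction k) (auto simp: init step)
  then show ?thesis by blast
qed

end
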